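(* Let $(G,\mathcal{A})$ be a local convergence pairing on $X$, and let $B,A_1,\dots,A_m\in\mathcal{A}$ be a crossing sequence. Let $(f_i)\subset G$ act as a convergence sequence on $B$ with attractor $p$ and repeller $n$. If for all $1\le j\le m$ we have $n\notin A_j$ and $f_i^{-1}(p)\notin A_j$ for all $i$, then $f_i(A_j)\to p$ for all $1\le j\le m$.
   Context: $X$ is a Peano continuum (compact, connected, locally connected metric space) without cut points and $G$ acts on $X$ by homeomorphisms; $\mathcal{A}$ is a $G$-invariant collection of closed subsets of $X$. For a closed set $S\subset X$ and connected $B,C\subset X\setminus S$, $S$ separates $B$ from $C$ if they lie in different components of $X\setminus S$; $S$ separates $Y$ if it separates two points of $Y$. Closed sets $A,B$ cross if $A\cap B\neq\emptyset$ or ($A$ separates $B$ and $B$ separates $A$). A crossing sequence is a sequence $A_1,\dots,A_n$ with $A_i$ crossing $A_{i+1}$ for $1\le i<n$. For $S\subset X$ and $p\in X$, $g_i(S)\to p$ means every neighborhood of $p$ contains $g_i(S)$ for all large $i$. A sequence $(g_i)$ of homeomorphisms of a space $Y$ is a convergence sequence on $Y$ with repeller $n$ and attractor $p$ if $g_i(C)\to p$ for every compact $C\subset Y\setminus\{n\}$; a sequence in $G$ acting as a convergence sequence on $A\in\mathcal{A}$ means its elements preserve $A$ and their restrictions form a convergence sequence on $A$. A group acts as a convergence group on $Y$ if every sequence of distinct elements has a subsequence that is a convergence sequence on $Y$. $(G,\mathcal{A})$ is a local convergence pairing on $X$ if: (1) $|A|>2$ for all $A\in\mathcal{A}$; (2)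 for each $\epsilon>0$ only finitely many $A\in\mathcal{A}$ have diameter $>\epsilon$; (3) for any $x,y\in X$ some finite $\mathcal{B}\subset\mathcal{A}$ has $\bigcup\mathcal{B}$ separating $x$ from $y$; (4) each stabilizer $\mathrm{Stab}(A)=\{g: g(A)=A\}$ acts as a convergence group on $A$; (5) for any $A,B\in\mathcal{A}$ with $|A\cap B|\le 2$: if $A\cap B=\{c\}$ then for any $b\in B\setminus\{c\}$ there is a finite crossing sequence $A,A_1,\dots,A_n,B$ in $\mathcal{A}$ with $\{b,c\}\cap A_i=\emptyset$ for $1\le i\le n$; if $|A\cap B|\ne1$ there is a crossing sequence $A,A_1,\dots,A_n,B$ in $\mathcal{A}$ with $(A\cap B)\cap A_i=\emptyset$ for $1\le i\le n$. *)

theory Defs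
  imports "HOL-Analysis.Analysis" "HOL-Algebra.Group_Action"
begin

definition peano_continuum :: "'a::metric_space set \<Rightarrow> bool" where
  "peano_continuum X \<longleftrightarrow> X \<noteq> {} \<and> compact X \<and> connected X \<and> locally connected X"

definition no_cut_points :: "'a::topological_space set \<Rightarrow> bool" where
  "no_cut_points X \<longleftrightarrow> (\<forall>x\<in>X. connected (X - {x}))"

definition separates_pts :: "'a::topological_space set \<Rightarrow> 'a set \<Rightarrow> 'a \<Rightarrow> 'a \<Rightarrow> bool" where
  "separates_pts X S x y \<longleftrightarrow> x \<in> X - S \<and> y \<in> X - S \<and> y \<notin> connected_component_set (X - S) x"

definition separates :: "'a::topological_space set \<Rightarrow> 'a set \<Rightarrow> 'a set \<Rightarrow> bool" where
  "separates X S Y \<longleftrightarrow> (\<exists>x\<in>Y. \<exists>y\<in>Y. separates_pts X S x y)"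

definition crosses :: "'a::topological_space set \<Rightarrow> 'a set \<Rightarrow> 'a set \<Rightarrow> bool" where
  "crosses X A B \<longleftrightarrow> A \<inter> B \<noteq> {} \<or> (separates X A B \<and> separates X B A)"

definition crossing_seq :: "'a::topological_space set \<Rightarrow> 'a set list \<Rightarrow> bool" where
  "crossing_seq X L \<longleftrightarrow> (\<forall>i. Suc i < length L \<longrightarrow> crosses X (L ! i) (L ! Suc i))"

definition sets_tend_to :: "(nat \<Rightarrow> 'a::topological_space set) \<Rightarrow> 'a \<Rightarrow> bool" where
  "sets_tend_to S p \<longleftrightarrow> (\<forall>U. open U \<and> p \<in> U \<longrightarrow> (\<forall>\<^sub>F i in sequentially. S i \<subseteq> U))"

definition conv_seq_maps :: "'a::topological_space set \<Rightarrow> (nat \<Rightarrow> 'a \<Rightarrow> 'a) \<Rightarrow> 'a \<Rightarrow> 'a \<Rightarrow> bool" where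
  "conv_seq_maps Y h n p \<longleftrightarrow> n \<in> Y \<and> p \<in> Y \<and>
     (\<forall>C. compact C \<and> C \<subseteq> Y - {n} \<longrightarrow> sets_tend_to (\<lambda>i. h i ` C) p)"

definition acts_conv_seq :: "('g, 'c) monoid_scheme \<Rightarrow> ('g \<Rightarrow> 'a::topological_space \<Rightarrow> 'a)
    \<Rightarrow> (nat \<Rightarrow> 'g) \<Rightarrow> 'a set \<Rightarrow> 'a \<Rightarrow> 'a \<Rightarrow> bool" where
  "acts_conv_seq G \<phi> f A n p \<longleftrightarrow> (\<forall>i. f i \<in> carrier G \<and> \<phi> (f i) ` A = A) \<and>
     conv_seq_maps A (\<lambda>i. \<phi> (f i)) n p"

definition Stab :: "('g, 'c) monoid_scheme \<Rightarrow> ('g \<Rightarrow> 'a \<Rightarrow> 'a) \<Rightarrow> 'a set \<Rightarrow> 'g set" where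
  "Stab G \<phi> A = {g \<in> carrier G. \<phi> g ` A = A}"

definition conv_group_on :: "('g, 'c) monoid_scheme \<Rightarrow> ('g \<Rightarrow> 'a::topological_space \<Rightarrow> 'a)
    \<Rightarrow> 'g set \<Rightarrow> 'a set \<Rightarrow> bool" where
  "conv_group_on G \<phi> H A \<longleftrightarrow> (\<forall>f::nat \<Rightarrow> 'g. (\<forall>i. f i \<in> H) \<and> inj f \<longrightarrow>
     (\<exists>(r::nat \<Rightarrow> nat) n p. strict_mono r \<and> acts_conv_seq G \<phi> (f \<circ> r) A n p))"

definition acts_by_homeos :: "('g, 'c) monoid_scheme \<Rightarrow> 'a::topological_space set \<Rightarrow> ('g \<Rightarrow> 'a \<Rightarrow> 'a) \<Rightarrow> bool" where
  "acts_by_homeos G X \<phi> \<longleftrightarrow> group_action G X \<phi> \<and>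
     (\<forall>g\<in>carrier G. homeomorphism X X (\<phi> g) (\<phi> (inv\<^bsub>G\<^esub> g)))"

definition local_convergence_pairing ::
  "('g, 'c) monoid_scheme \<Rightarrow> ('g \<Rightarrow> 'a::metric_space \<Rightarrow> 'a) \<Rightarrow> 'a set set \<Rightarrow> 'a set \<Rightarrow> bool" where
  "local_convergence_pairing G \<phi> \<A> X \<longleftrightarrow>
     \<comment> \<open>standing: \<A> is a G-invariant collection of closed subsets of X\<close>
     (\<forall>A\<in>\<A>. closed A \<and> A \<subseteq> X) \<and>
     (\<forall>g\<in>carrier G. \<forall>A\<in>\<A>. \<phi> g ` A \<in> \<A>) \<and>
     \<comment> \<open>(1)\<close>
     (\<forall>A\<in>\<A>. infinite A \<or> card A > 2) \<and>
     \<comment> \<open>(2)\<close>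
     (\<forall>\<epsilon>>0. finite {A\<in>\<A>. diameter A > \<epsilon>}) \<and>
     \<comment> \<open>(3)\<close>
     (\<forall>x\<in>X. \<forall>y\<in>X. x \<noteq> y \<longrightarrow>
        (\<exists>\<B>. finite \<B> \<and> \<B> \<subseteq> \<A> \<and> separates_pts X (\<Union>\<B>) x y)) \<and>
     \<comment> \<open>(4)\<close>
     (\<forall>A\<in>\<A>. conv_group_on G \<phi> (Stab G \<phi> A) A) \<and>
     \<comment> \<open>(5)\<close>
     (\<forall>A\<in>\<A>. \<forall>B\<in>\<A>. finite (A \<inter> B) \<and> card (A \<inter> B) \<le> 2 \<longrightarrow>
        (\<forall>c. A \<inter> B = {c} \<longrightarrow>
           (\<forall>b\<in>B - {c}. \<exists>As. set As \<subseteq> \<A> \<and> crossing_seq X (A # As @ [B]) \<and>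
               (\<forall>Ai\<in>set As. b \<notin> Ai \<and> c \<notin> Ai))) \<and>
        (card (A \<inter> B) \<noteq> 1 \<longrightarrow>
           (\<exists>As. set As \<subseteq> \<A> \<and> crossing_seq X (A # As @ [B]) \<and>
               (\<forall>Ai\<in>set As. A \<inter> B \<inter> Ai = {}))))"

end

theory Submission
  imports Defs
begin

text \<open>
  If the images f_i(A) did not converge to p, infinitely many of them would avoid a fixed ball
  around p: only finitely many members of the pairing are large, so infinitely many large images
  coincide with a single closed set missing p. That is impossible once A contains a point whose
  orbit tends to p, or separates two such points x and y: pulling back by f_i a small connected
  neighbourhood of p containing f_i(x) and f_i(y) would join x and y in X - A.
  Along the crossing sequence, A_1 meets or separates B - {n}, all of whose points have orbits
  tending to p; a separated point equal to the repeller can be replaced by a nearby point of B in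
  its component of X - A_1, because n is not isolated in B (B has more than two points and is
  preserved by the f_i). Each A_(j+1) in turn meets or separates A_j, whose points have orbits
  tending to p.
\<close>

lemma tendsto_of_sets_tend_to:
  assumes "sets_tend_to S p" and "\<And>i. s i \<in> S i"
  shows "s \<longlonglongrightarrow> p"
proof (rule topological_tendstoI)
  fix U assume "open U" "p \<in> U"
  then have "\<forall>\<^sub>F i in sequentially. S i \<subseteq> U"
    using assms(1) unfolding sets_tend_to_def by blast
  then show "\<forall>\<^sub>F i in sequentially. s i \<in> U"
    by (rule eventually_mono) (use assms(2) in blast)
qed

lemma conv_seq_maps_tendsto:
  assumes "conv_seq_maps B h n p" and "t \<in> B - {n}"
  shows "(\<lambda>i. h i t) \<longlonglongrightarrow> p"
proof (rule tendsto_of_sets_tend_to)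
  have "compact {t} \<and> {t} \<subseteq> B - {n}" using assms(2) by simp
  then show "sets_tend_to (\<lambda>i. h i ` {t}) p" using assms(1) unfolding conv_seq_maps_def by blast
qed simp

lemma frequently_disjoint_ball_if_not_sets_tend_to:
  fixes S :: "nat \<Rightarrow> 'a::metric_space set"
  assumes small: "\<forall>\<epsilon>>0. finite {A\<in>\<A>. diameter A > \<epsilon>}"
    and S: "\<And>i. S i \<in> \<A>" "\<And>i. closed (S i)" "\<And>i. bounded (S i)" "\<And>i. p \<notin> S i"
    and not_tend: "\<not> sets_tend_to S p"
  shows "\<exists>\<delta>>0. \<exists>\<^sub>F i in sequentially. S i \<inter> ball p \<delta> = {}"
proof -
  obtain U where U: "open U" "p \<in> U" and leave: "\<exists>\<^sub>F i in sequentially. \<not> S i \<subseteq> U"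
    using not_tend unfolding sets_tend_to_def by (auto simp: not_eventually)
  obtain e where e: "e > 0" "ball p e \<subseteq> U"
    using U open_contains_ball by blast
  define \<epsilon> where "\<epsilon> = e / 2"
  define F where "F = {A\<in>\<A>. diameter A > \<epsilon> / 2}"
  have "finite F" unfolding F_def by (rule small[rule_format]) (use e(1) \<epsilon>_def in simp)
  have large_or_far: "S i \<in> F \<or> S i \<inter> ball p \<epsilon> = {}" if out: "\<not> S i \<subseteq> U" for i
  proof (rule disjCI)
    assume "S i \<inter> ball p \<epsilon> \<noteq> {}"
    then obtain z1 where z1: "z1 \<in> S i" "dist p z1 < \<epsilon>" by auto
    obtain z2 where z2: "z2 \<in> S i" "z2 \<notin> U" using out by auto
    have "e \<le> dist p z2" using z2(2) e(2) by (auto simp: subset_eq not_less)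
    then have "\<epsilon> / 2 < dist z1 z2"
      using e(1) z1(2) dist_triangle[of p z2 z1] unfolding \<epsilon>_def by (simp add: dist_commute)
    also have "dist z1 z2 \<le> diameter (S i)"
      using diameter_bounded_bound[OF S(3) z1(1) z2(1)] .
    finally show "S i \<in> F" using S(1) unfolding F_def by simp
  qed
  from leave have "\<exists>\<^sub>F i in sequentially. S i \<in> F \<or> S i \<inter> ball p \<epsilon> = {}"
    by (rule frequently_elim1) (rule large_or_far)
  then consider "\<exists>\<^sub>F i in sequentially. S i \<in> F" | "\<exists>\<^sub>F i in sequentially. S i \<inter> ball p \<epsilon> = {}"
    by (auto simp: frequently_disj_iff)
  then show ?thesis
  proof cases
    case 1
    \<comment> \<open>only finitely many sets are large, so one of them recurs, and it misses a ball around p\<close>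
    then have "\<exists>\<^sub>F i in sequentially. \<exists>C\<in>F. S i = C" by (rule frequently_elim1) blast
    from frequently_bex_finite[OF \<open>finite F\<close> this]
    obtain C where C: "\<exists>\<^sub>F i in sequentially. S i = C" by blast
    then obtain i where "S i = C" using frequently_ex by blast
    then have "open (- C)" "p \<in> - C" using S(2,4) by auto
    then obtain \<delta> where \<delta>: "\<delta> > 0" "ball p \<delta> \<subseteq> - C" using open_contains_ball by blast
    have "\<exists>\<^sub>F i in sequentially. S i \<inter> ball p \<delta> = {}"
      using C by (rule frequently_elim1) (use \<delta>(2) in auto)
    then show ?thesis using \<delta>(1) by blast
  next
    case 2
    then show ?thesis using e(1) \<epsilon>_def by auto
  qed
qed

lemma separates_pts_image_meets_connected:
  assumes hom: "homeomorphism X X h k" and sep: "separates_pts X A x y"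
    and u: "connected u" "u \<subseteq> X" "h x \<in> u" "h y \<in> u"
  shows "u \<inter> h ` A \<noteq> {}"
proof
  assume disj: "u \<inter> h ` A = {}"
  have hk: "h (k z) = z" "k z \<in> X" if "z \<in> X" for z
    using hom that unfolding homeomorphism_def by auto
  have kh: "k (h z) = z" if "z \<in> X" for z
    using hom that unfolding homeomorphism_def by auto
  have "x \<in> X" "y \<in> X" using sep unfolding separates_pts_def by auto
  have "connected (k ` u)"
    using continuous_on_subset[OF homeomorphism_cont2[OF hom] u(2)] u(1)
    by (rule connected_continuous_image)
  moreover have "k ` u \<subseteq> X - A"
  proof
    fix w assume "w \<in> k ` u"
    then obtain z where z: "z \<in> u" "w = k z" by blast
    then have "z \<in> X" using u(2) by blast
    then have "w \<in> X" "h w = z" using hk z(2) by auto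
    moreover have "z \<notin> h ` A" using disj z(1) by blast
    ultimately show "w \<in> X - A" by auto
  qed
  moreover have "x \<in> k ` u" "y \<in> k ` u"
    using kh \<open>x \<in> X\<close> \<open>y \<in> X\<close> u(3,4) by (metis image_eqI)+
  ultimately have "connected_component (X - A) x y" by (rule connected_componentI)
  then show False using sep unfolding separates_pts_def by simp
qed

lemma eventually_separating_image_meets_ball:
  fixes X A :: "'a::metric_space set"
  assumes X: "closed X" "locally connected X"
    and hom: "\<And>i. homeomorphism X X (h i) (k i)"
    and sep: "separates_pts X A x y"
    and lim: "(\<lambda>i. h i x) \<longlonglongrightarrow> p" "(\<lambda>i. h i y) \<longlonglongrightarrow> p" and "\<delta> > 0"
  shows "\<forall>\<^sub>F i in sequentially. h i ` A \<inter> ball p \<delta> \<noteq> {}"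
proof -
  have hX: "h i z \<in> X" if "z \<in> X" for i z
    using hom[of i] that unfolding homeomorphism_def by blast
  have "x \<in> X" "y \<in> X" using sep unfolding separates_pts_def by auto
  then have "p \<in> X" using closed_sequentially[OF X(1) _ lim(1)] hX by blast
  then obtain u where u: "openin (top_of_set X) u" "connected u" "p \<in> u" "u \<subseteq> X \<inter> ball p \<delta>"
    using X(2) \<open>\<delta> > 0\<close> unfolding locally_connected
    by (meson IntI centre_in_ball openin_open_Int open_ball)
  then obtain W where W: "open W" "u = X \<inter> W" by (auto simp: openin_open)
  have "\<forall>\<^sub>F i in sequentially. h i x \<in> W \<and> h i y \<in> W"
    using lim W u(3) by (intro eventually_conj topological_tendstoD) auto
  then show ?thesis
  proof (rule eventually_mono)
    fix i assume "h i x \<in> W \<and> h i y \<in> W"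
    then have "h i x \<in> u" "h i y \<in> u" using W(2) hX \<open>x \<in> X\<close> \<open>y \<in> X\<close> by auto
    then have "u \<inter> h i ` A \<noteq> {}"
      using separates_pts_image_meets_connected[OF hom sep u(2)] u(4) by blast
    then show "h i ` A \<inter> ball p \<delta> \<noteq> {}" using u(4) by blast
  qed
qed

lemma sets_tend_to_if_meets_or_separates:
  fixes X A T :: "'a::metric_space set"
  assumes X: "compact X" "locally connected X"
    and hom: "\<And>i. homeomorphism X X (h i) (k i)"
    and small: "\<forall>\<epsilon>>0. finite {C\<in>\<A>. diameter C > \<epsilon>}"
    and A: "\<And>i. h i ` A \<in> \<A>" "closed A" "A \<subseteq> X" "\<And>i. k i p \<notin> A"
    and T: "\<And>t. t \<in> T \<Longrightarrow> (\<lambda>i. h i t) \<longlonglongrightarrow> p"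
    and meets_or_separates: "T \<inter> A \<noteq> {} \<or> separates X A T"
  shows "sets_tend_to (\<lambda>i. h i ` A) p"
proof (rule ccontr)
  assume not_tend: "\<not> sets_tend_to (\<lambda>i. h i ` A) p"
  have "compact A"
    using closed_Int_compact[OF A(2) X(1)] A(3) by (simp add: Int_absorb2)
  then have "compact (h i ` A)" for i
    using compact_continuous_image[OF continuous_on_subset[OF homeomorphism_cont1[OF hom] A(3)]]
    by blast
  moreover have "p \<notin> h i ` A" for i
  proof
    assume "p \<in> h i ` A"
    then obtain a where "a \<in> A" "p = h i a" by blast
    then have "k i p \<in> A" using hom[of i] A(3) unfolding homeomorphism_def by auto
    then show False using A(4) by blast
  qed
  ultimately obtain \<delta> where "\<delta> > 0" and far: "\<exists>\<^sub>F i in sequentially. h i ` A \<inter> ball p \<delta> = {}"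
    using frequently_disjoint_ball_if_not_sets_tend_to[OF small A(1) _ _ _ not_tend]
      compact_imp_bounded compact_imp_closed by blast
  have "\<forall>\<^sub>F i in sequentially. h i ` A \<inter> ball p \<delta> \<noteq> {}"
    using meets_or_separates
  proof
    assume "T \<inter> A \<noteq> {}"
    then obtain a where "a \<in> A" "(\<lambda>i. h i a) \<longlonglongrightarrow> p" using T by blast
    then show ?thesis
      using tendstoD[of "\<lambda>i. h i a" p sequentially \<delta>] \<open>\<delta> > 0\<close>
      by (auto elim!: eventually_mono simp: dist_commute)
  next
    assume "separates X A T"
    then obtain x y where "x \<in> T" "y \<in> T" "separates_pts X A x y"
      unfolding separates_def by blast
    then show ?thesis
      using eventually_separating_image_meets_ball[where h = h and k = k]
        compact_imp_closed[OF X(1)] X(2) hom T \<open>\<delta> > 0\<close> by blast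
  qed
  from frequently_eventually_conj[OF far this] show False
    by (auto dest: frequently_ex)
qed

lemma local_convergence_pairing_sets_tend_to:
  assumes X: "peano_continuum X" and acts: "acts_by_homeos G X \<phi>"
    and pairing: "local_convergence_pairing G \<phi> \<A> X"
    and A: "A \<in> \<A>" "\<forall>i. \<phi> (inv\<^bsub>G\<^esub> (f i)) p \<notin> A" and f: "\<And>i. f i \<in> carrier G"
    and T: "\<And>t. t \<in> T \<Longrightarrow> (\<lambda>i. \<phi> (f i) t) \<longlonglongrightarrow> p"
    and meets_or_separates: "T \<inter> A \<noteq> {} \<or> separates X A T"
  shows "sets_tend_to (\<lambda>i. \<phi> (f i) ` A) p"
proof (rule sets_tend_to_if_meets_or_separates
    [where h = "\<lambda>i. \<phi> (f i)" and k = "\<lambda>i. \<phi> (inv\<^bsub>G\<^esub> (f i))",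
     OF _ _ _ _ _ _ _ _ T meets_or_separates])
  show "compact X" "locally connected X" using X unfolding peano_continuum_def by auto
  show "homeomorphism X X (\<phi> (f i)) (\<phi> (inv\<^bsub>G\<^esub> (f i)))" for i
    using acts f unfolding acts_by_homeos_def by blast
  show "\<forall>\<epsilon>>0. finite {C\<in>\<A>. diameter C > \<epsilon>}" "\<phi> (f i) ` A \<in> \<A>" "closed A" "A \<subseteq> X" for i
    using pairing A(1) f unfolding local_convergence_pairing_def by auto
  show "\<phi> (inv\<^bsub>G\<^esub> (f i)) p \<notin> A" for i using A(2) by blast
qed

lemma conv_seq_maps_punctured_not_compact:
  fixes B :: "'a::t1_space set"
  assumes conv: "conv_seq_maps B h n p" and onto: "\<And>i. h i ` B = B"
    and big: "infinite B \<or> card B > 2"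
  shows "\<not> compact (B - {n})"
proof
  assume "compact (B - {n})"
  then have tend: "sets_tend_to (\<lambda>i. h i ` (B - {n})) p"
    using conv unfolding conv_seq_maps_def by blast
  have not_sub: "\<not> B \<subseteq> {p, q}" for q
  proof
    assume "B \<subseteq> {p, q}"
    moreover have "card {p, q} \<le> 2" by (simp add: card_insert_if)
    ultimately show False
      using big finite_subset[of B "{p, q}"] card_mono[of "{p, q}" B] by auto
  qed
  obtain q1 where q1: "q1 \<in> B" "q1 \<noteq> p" using not_sub[of p] by blast
  obtain q2 where q2: "q2 \<in> B" "q2 \<notin> {p, q1}" using not_sub[of q1] by blast
  have "open (- {q1, q2})" by (simp add: open_Compl)
  moreover have "p \<in> - {q1, q2}" using q1 q2 by auto
  ultimately have "\<forall>\<^sub>F i in sequentially. h i ` (B - {n}) \<subseteq> - {q1, q2}"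
    using tend unfolding sets_tend_to_def by blast
  then obtain i where i: "h i ` (B - {n}) \<subseteq> - {q1, q2}"
    by (auto simp: eventually_sequentially)
  \<comment> \<open>h i maps B - {n} onto B - {h i n}, which still contains q1 or q2\<close>
  have "B - {h i n} \<subseteq> h i ` (B - {n})" using onto[of i] by blast
  then show False using i q1 q2 by blast
qed

lemma islimpt_if_punctured_not_compact:
  assumes "compact B" and "\<not> compact (B - {n})"
  shows "n islimpt B"
proof (rule ccontr)
  assume "\<not> n islimpt B"
  then obtain U where "open U" "n \<in> U" "\<forall>y\<in>B. y \<in> U \<longrightarrow> y = n"
    unfolding islimpt_def by blast
  then have "B - {n} = B \<inter> - U" by blast
  then show False
    using assms compact_Int_closed[OF assms(1) closed_Compl[OF \<open>open U\<close>]] by simp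
qed

lemma connected_component_meets_at_limit_point:
  assumes X: "locally connected X" and A: "closed A" and n: "n \<in> X - A"
    and lim: "n islimpt B" and B: "B \<subseteq> X"
  shows "\<exists>z\<in>B - {n}. connected_component (X - A) n z"
proof -
  have "openin (top_of_set X) (X - A)"
    using openin_open_Int[OF open_Compl[OF A]] by (simp add: Diff_eq)
  then have "openin (top_of_set X) (connected_component_set (X - A) n)"
    using X n unfolding locally_connected_open_connected_component by blast
  then obtain W where W: "open W" "connected_component_set (X - A) n = X \<inter> W"
    by (auto simp: openin_open)
  moreover have "n \<in> connected_component_set (X - A) n" using n by simp
  ultimately have "n \<in> W" by blast
  then obtain z where "z \<in> B" "z \<in> W" "z \<noteq> n" using islimptE[OF lim _ W(1)] by blast
  then show ?thesis using W(2) B by blast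
qed

lemma separates_pts_connected_component:
  assumes "separates_pts X A x y"
    and "connected_component (X - A) x x'" and "connected_component (X - A) y y'"
  shows "separates_pts X A x' y'"
  using assms unfolding separates_pts_def
  by (metis connected_component_in connected_component_sym connected_component_trans
      mem_Collect_eq)

lemma separates_punctured:
  assumes X: "locally connected X" and A: "closed A" "n \<notin> A"
    and lim: "n islimpt B" and B: "B \<subseteq> X" and sep: "separates X A B"
  shows "separates X A (B - {n})"
proof -
  have move: "\<exists>z'\<in>B - {n}. connected_component (X - A) z z'" if "z \<in> B - A" for z
  proof (cases "z = n")
    case True
    then show ?thesis
      using connected_component_meets_at_limit_point[OF X A(1) _ lim B] that B by blast
  next
    case False
    then show ?thesis using that B by (intro bexI[of _ z] connected_component_refl) auto
  qed
  obtain x y where "x \<in> B" "y \<in> B" and sep_xy: "separates_pts X A x y"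
    using sep unfolding separates_def by blast
  then have "x \<in> B - A" "y \<in> B - A" unfolding separates_pts_def by blast+
  then obtain x' y' where x': "x' \<in> B - {n}" "connected_component (X - A) x x'"
    and y': "y' \<in> B - {n}" "connected_component (X - A) y y'"
    using move by blast
  show ?thesis
    unfolding separates_def
    using separates_pts_connected_component[OF sep_xy x'(2) y'(2)] x'(1) y'(1) by blast
qed

lemma crosses_punctured_meets_or_separates:
  assumes X: "locally connected X" and A: "closed A" "n \<notin> A"
    and lim: "n islimpt B" and B: "B \<subseteq> X" and cross: "crosses X B A"
  shows "(B - {n}) \<inter> A \<noteq> {} \<or> separates X A (B - {n})"
  using cross separates_punctured[OF X A lim B] A(2) unfolding crosses_def by blast

lemma crossing_seq_propagate:
  assumes seq: "crossing_seq X (C # As)"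
    and first: "\<And>A. A \<in> set As \<Longrightarrow> crosses X C A \<Longrightarrow> Q A"
    and step: "\<And>P A. P \<in> set As \<Longrightarrow> A \<in> set As \<Longrightarrow> Q P \<Longrightarrow> crosses X P A \<Longrightarrow> Q A"
  shows "\<forall>A\<in>set As. Q A"
proof -
  have "Q (As ! j)" if "j < length As" for j
    using that
  proof (induction j)
    case 0
    then have "crosses X C (As ! 0)" using seq unfolding crossing_seq_def by fastforce
    then show ?case using first 0 by simp
  next
    case (Suc j)
    then have "crosses X (As ! j) (As ! Suc j)" using seq unfolding crossing_seq_def by fastforce
    then show ?case using step[OF nth_mem nth_mem Suc.IH] Suc.prems by simp
  qed
  then show ?thesis by (metis in_set_conv_nth)
qed

theorem lemma4p5:
  fixes X :: "'a::metric_space set"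
    and G :: "('g, 'c) monoid_scheme"
    and \<phi> :: "'g \<Rightarrow> 'a \<Rightarrow> 'a"
    and \<A> :: "'a set set"
    and B :: "'a set" and As :: "'a set list"
    and f :: "nat \<Rightarrow> 'g" and n p :: 'a
  assumes "peano_continuum X" and "no_cut_points X"
    and "acts_by_homeos G X \<phi>"
    and "local_convergence_pairing G \<phi> \<A> X"
    and "B \<in> \<A>" and "set As \<subseteq> \<A>"
    and "crossing_seq X (B # As)"
    and "acts_conv_seq G \<phi> f B n p"
    and "\<forall>A\<in>set As. n \<notin> A \<and> (\<forall>i. \<phi> (inv\<^bsub>G\<^esub> (f i)) p \<notin> A)"
  shows "\<forall>A\<in>set As. sets_tend_to (\<lambda>i. \<phi> (f i) ` A) p"
proof -
  have X: "compact X" "locally connected X"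
    using assms(1) unfolding peano_continuum_def by auto
  have \<A>: "\<forall>A\<in>\<A>. closed A \<and> A \<subseteq> X" "\<forall>A\<in>\<A>. infinite A \<or> card A > 2"
    using assms(4) unfolding local_convergence_pairing_def by auto
  have f: "\<And>i. f i \<in> carrier G" "\<And>i. \<phi> (f i) ` B = B"
    and conv: "conv_seq_maps B (\<lambda>i. \<phi> (f i)) n p"
    using assms(8) unfolding acts_conv_seq_def by auto
  have B: "closed B" "B \<subseteq> X" using \<A>(1) assms(5) by auto
  have "compact B" using closed_Int_compact[OF B(1) X(1)] B(2) by (simp add: Int_absorb2)
  then have "n islimpt B"
    using islimpt_if_punctured_not_compact conv_seq_maps_punctured_not_compact[OF conv f(2)]
      \<A>(2) assms(5) by blast
  have tends: "sets_tend_to (\<lambda>i. \<phi> (f i) ` A) p"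
    if "A \<in> set As" "\<And>t. t \<in> T \<Longrightarrow> (\<lambda>i. \<phi> (f i) t) \<longlonglongrightarrow> p"
      "T \<inter> A \<noteq> {} \<or> separates X A T" for A T
    using local_convergence_pairing_sets_tend_to[OF assms(1,3,4) _ _ f(1) that(2,3)]
      that(1) assms(6,9) by blast
  show ?thesis
  proof (rule crossing_seq_propagate[OF assms(7)])
    fix A assume A: "A \<in> set As" and "crosses X B A"
    then have "n \<notin> A" "closed A" using assms(6,9) \<A>(1) by auto
    then have "(B - {n}) \<inter> A \<noteq> {} \<or> separates X A (B - {n})"
      using crosses_punctured_meets_or_separates[OF X(2) _ _ \<open>n islimpt B\<close> B(2) \<open>crosses X B A\<close>]
      by blast
    then show "sets_tend_to (\<lambda>i. \<phi> (f i) ` A) p"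
      using tends[OF A] conv_seq_maps_tendsto[OF conv] by blast
  next
    fix P A assume A: "A \<in> set As" and P: "sets_tend_to (\<lambda>i. \<phi> (f i) ` P) p" and "crosses X P A"
    have "(\<lambda>i. \<phi> (f i) t) \<longlonglongrightarrow> p" if "t \<in> P" for t
      using P by (rule tendsto_of_sets_tend_to) (use that in blast)
    then show "sets_tend_to (\<lambda>i. \<phi> (f i) ` A) p"
      using tends[OF A] \<open>crosses X P A\<close> unfolding crosses_def by blast
  qed
qed

end
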